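(* Let $q=c_{34}x_1x_2+c_{24}x_1x_3+c_{23}x_1x_4+c_{14}x_2x_3+c_{13}x_2x_4+c_{12}x_3x_4\in\mathbb{R}[x_1,x_2,x_3,x_4]$ be Lorentzian. Then for every $r\in\mathbb{R}$, \[ (r+1)\,c_{14}c_{23}+r(r+1)\,c_{13}c_{24}\;\ge\; r\,c_{12}c_{34}. \]
   Context: A homogeneous quadratic polynomial is Lorentzian if its coefficients are nonnegative, its support is M-convex (for exponent vectors $\alpha,\beta$ in the support and $i$ with $\alpha_i>\beta_i$ there is $j$ with $\alpha_j<\beta_j$ and $\alpha-e_i+e_j$ in the support), and its Hessian matrix has at most one positive eigenvalue. *)

theory Defs
  imports "Jordan_Normal_Form.Char_Poly"
begin

(* Polynomials in the variables x_0,...,x_{n-1} (paper: x_1..x_n) are represented by their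
   coefficient function on exponent vectors alpha :: nat => nat (alpha i = exponent of x_i). *)

definition unit_exp :: "nat \<Rightarrow> (nat \<Rightarrow> nat)" where
  "unit_exp i = (\<lambda>k. if k = i then 1 else 0)"

definition supp_poly :: "((nat \<Rightarrow> nat) \<Rightarrow> real) \<Rightarrow> (nat \<Rightarrow> nat) set" where
  "supp_poly p = {\<alpha>. p \<alpha> \<noteq> 0}"

definition hom_quadratic :: "nat \<Rightarrow> ((nat \<Rightarrow> nat) \<Rightarrow> real) \<Rightarrow> bool" where
  "hom_quadratic n p \<longleftrightarrow>
     (\<forall>\<alpha>\<in>supp_poly p. (\<forall>i. i \<ge> n \<longrightarrow> \<alpha> i = 0) \<and> (\<Sum>i<n. \<alpha> i) = 2)"

definition M_convex :: "nat \<Rightarrow> (nat \<Rightarrow> nat) set \<Rightarrow> bool" where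
  "M_convex n S \<longleftrightarrow>
     (\<forall>\<alpha>\<in>S. \<forall>\<beta>\<in>S. \<forall>i<n. \<alpha> i > \<beta> i \<longrightarrow>
        (\<exists>j<n. \<alpha> j < \<beta> j \<and> (\<alpha>(i := \<alpha> i - 1))(j := \<alpha> j + 1) \<in> S))"

(* Hessian matrix of a homogeneous quadratic polynomial: entry (i,j) is d^2 p / dx_i dx_j *)
definition hessian_quad :: "nat \<Rightarrow> ((nat \<Rightarrow> nat) \<Rightarrow> real) \<Rightarrow> real mat" where
  "hessian_quad n p = mat n n (\<lambda>(i, j).
      if i = j then 2 * p (\<lambda>k. if k = i then 2 else 0)
      else p (\<lambda>k. unit_exp i k + unit_exp j k))"

definition num_pos_eigenvalues :: "real mat \<Rightarrow> nat" where
  "num_pos_eigenvalues A = (\<Sum>x \<in> {x. x > 0 \<and> eigenvalue A x}. order x (char_poly A))"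

definition lorentzian_quadratic :: "nat \<Rightarrow> ((nat \<Rightarrow> nat) \<Rightarrow> real) \<Rightarrow> bool" where
  "lorentzian_quadratic n p \<longleftrightarrow>
     hom_quadratic n p \<and> (\<forall>\<alpha>. p \<alpha> \<ge> 0) \<and> M_convex n (supp_poly p) \<and>
     num_pos_eigenvalues (hessian_quad n p) \<le> 1"

(* The quadratic
   q = c34 x1x2 + c24 x1x3 + c23 x1x4 + c14 x2x3 + c13 x2x4 + c12 x3x4,
   with the paper's variables x1..x4 represented as indices 0..3. *)
definition quad4 :: "real \<Rightarrow> real \<Rightarrow> real \<Rightarrow> real \<Rightarrow> real \<Rightarrow> real \<Rightarrow> (nat \<Rightarrow> nat) \<Rightarrow> real" where
  "quad4 c12 c13 c14 c23 c24 c34 = (\<lambda>\<alpha>.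
     if \<alpha> = (\<lambda>k. unit_exp 0 k + unit_exp 1 k) then c34
     else if \<alpha> = (\<lambda>k. unit_exp 0 k + unit_exp 2 k) then c24
     else if \<alpha> = (\<lambda>k. unit_exp 0 k + unit_exp 3 k) then c23
     else if \<alpha> = (\<lambda>k. unit_exp 1 k + unit_exp 2 k) then c14
     else if \<alpha> = (\<lambda>k. unit_exp 1 k + unit_exp 3 k) then c13
     else if \<alpha> = (\<lambda>k. unit_exp 2 k + unit_exp 3 k) then c12
     else 0)"

end

theory Submission
  imports Defs "HOL-Library.Quadratic_Discriminant"
begin

(* The Hessian H of q has zero diagonal and the c_ij off the diagonal. Its characteristic
   polynomial is x^4 - S x^2 - T x + d, where the constant term d = det H is precisely the
   discriminant of the quadratic c13 c24 r^2 + (c13 c24 + c14 c23 - c12 c34) r + c14 c23 to be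
   shown nonnegative. As H is real symmetric, its eigenvalues are real; they sum to trace H = 0
   and multiply to d. If d > 0, an even number of them is negative and, since they sum to 0, at
   least two are positive, contradicting the Lorentzian signature. So d <= 0, and the quadratic,
   whose outer coefficients are nonnegative, is nonnegative everywhere. *)

lemma det_mat_Suc:
  "det (mat (Suc n) (Suc n) f :: 'a :: comm_ring_1 mat) =
     (\<Sum>j<Suc n. (-1)^j * f (0, j) * det (mat n n (\<lambda>(i, k). f (Suc i, if k < j then k else Suc k))))"
proof -
  have "mat_delete (mat (Suc n) (Suc n) f) 0 j = mat n n (\<lambda>(i, k). f (Suc i, if k < j then k else Suc k))"
    if "j < Suc n" for j
    using that by (intro eq_matI) (auto simp: mat_delete_def)
  then show ?thesis
    by (simp add: laplace_expansion_row[of _ "Suc n" 0] cofactor_def ac_simps)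
qed

lemma eigenvalue_of_real_symmetric_in_Reals:
  fixes A :: "real mat"
  assumes A: "A \<in> carrier_mat n n" and sym: "transpose_mat A = A"
    and ev: "eigenvalue (map_mat complex_of_real A) z"
  shows "z \<in> \<real>"
proof -
  define C where "C = map_mat complex_of_real A"
  have C: "C \<in> carrier_mat n n" "transpose_mat C = C"
    using A sym by (auto simp: C_def map_mat_transpose)
  obtain v where v: "v \<in> carrier_vec n" "v \<noteq> 0\<^sub>v n" "C *\<^sub>v v = z \<cdot>\<^sub>v v"
    using ev A unfolding C_def eigenvalue_def eigenvector_def by auto
  have "conjugate (C *\<^sub>v v) = C *\<^sub>v conjugate v"
    using A v(1) by (intro eq_vecI)
      (auto simp: C_def mult_mat_vec_def scalar_prod_def sum_conjugate conjugate_dist_mul)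
  then have conj_ev: "C *\<^sub>v conjugate v = cnj z \<cdot>\<^sub>v conjugate v"
    using v(3) by (simp add: conjugate_smult_vec)
  have "z * (conjugate v \<bullet> v) = conjugate v \<bullet> (C *\<^sub>v v)"
    using v by simp
  also have "\<dots> = (transpose_mat C *\<^sub>v conjugate v) \<bullet> v"
    using transpose_vec_mult_scalar[OF C(1) v(1), of "conjugate v"] v(1) by simp
  also have "\<dots> = cnj z * (conjugate v \<bullet> v)"
    using C(2) conj_ev v(1) by simp
  finally have "z * (conjugate v \<bullet> v) = cnj z * (conjugate v \<bullet> v)" .
  moreover have "conjugate v \<bullet> v \<noteq> 0"
    using v(1,2) conjugate_vec_sprod_comm[OF v(1) v(1)] by (metis conjugate_square_eq_0_vec)
  ultimately show ?thesis by (simp add: Reals_cnj_iff)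
qed

lemma char_poly_real_symmetric_linear_factors:
  fixes A :: "real mat"
  assumes A: "A \<in> carrier_mat n n" and sym: "transpose_mat A = A"
  obtains rs where "char_poly A = (\<Prod>r\<leftarrow>rs. [:-r, 1:])" "length rs = n"
proof -
  interpret of_real_poly: map_poly_inj_comm_ring_hom "complex_of_real" ..
  let ?C = "map_mat complex_of_real A"
  obtain as where as: "char_poly ?C = (\<Prod>a\<leftarrow>as. [:-a, 1:])" "length as = n"
    using char_poly_factorized[of ?C n] A by auto
  have "a \<in> \<real>" if "a \<in> set as" for a
    using eigenvalue_of_real_symmetric_in_Reals[OF A sym] eigenvalue_root_char_poly[of ?C n a] A
      linear_poly_root[OF that] by (simp add: as(1))
  then have re: "complex_of_real (Re a) = a" if "a \<in> set as" for a
    using that by (auto elim: Reals_cases)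
  have "map_poly complex_of_real (char_poly A) = (\<Prod>a\<leftarrow>as. [:-a, 1:])"
    by (metis as(1) of_real_hom.char_poly_hom[OF A])
  also have "\<dots> = map_poly complex_of_real (\<Prod>r\<leftarrow>map Re as. [:-r, 1:])"
    by (simp add: of_real_poly.hom_prod_list o_def re cong: map_cong)
  finally have "char_poly A = (\<Prod>r\<leftarrow>map Re as. [:-r, 1:])"
    by (rule of_real_poly.injectivity)
  with as(2) show thesis by (intro that[of "map Re as"]) auto
qed

lemma num_pos_eigenvalues_linear_factors:
  assumes A: "A \<in> carrier_mat n n" and cp: "char_poly A = (\<Prod>r\<leftarrow>rs. [:-r, 1:])"
  shows "num_pos_eigenvalues A = length (filter (\<lambda>r. 0 < r) rs)"
proof -
  have order: "order x (\<Prod>r\<leftarrow>rs. [:-r, 1:]) = count_list rs x" for x :: real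
  proof (induction rs)
    case (Cons a rs)
    have "(\<Prod>r\<leftarrow>rs. [:-r, 1:]) \<noteq> 0"
      using monic_prod_list[of "map (\<lambda>r. [:-r, 1:]) rs"] by force
    then show ?case
      using Cons.IH by (simp add: order_mult order_linear' del: mult_pCons_left)
  qed simp
  have "{x. 0 < x \<and> eigenvalue A x} = set (filter (\<lambda>r. 0 < r) rs)"
    using eigenvalue_root_char_poly[OF A] by (auto simp: cp poly_prod_list_zero_iff)
  then have "num_pos_eigenvalues A =
      (\<Sum>x\<in>set (filter (\<lambda>r. 0 < r) rs). count_list (filter (\<lambda>r. 0 < r) rs) x)"
    unfolding num_pos_eigenvalues_def cp order
    by (intro sum.cong) (auto simp: count_list_eq_length_filter intro!: arg_cong[where f=length] filter_cong)
  also have "\<dots> = length (filter (\<lambda>r. 0 < r) rs)"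
    by (rule sum_count_set) auto
  finally show ?thesis .
qed

lemma prod_list_pos_iff_even_negatives:
  fixes rs :: "'a :: linordered_idom list"
  assumes "0 \<notin> set rs"
  shows "0 < prod_list rs \<longleftrightarrow> even (length (filter (\<lambda>r. r < 0) rs))"
  using assms by (induction rs) (auto simp: zero_less_mult_iff not_less le_less)

lemma two_le_positives_if_sum_zero_prod_pos:
  fixes rs :: "'a :: linordered_idom list"
  assumes "rs \<noteq> []" "even (length rs)" "sum_list rs = 0" "0 < prod_list rs"
  shows "2 \<le> length (filter (\<lambda>r. 0 < r) rs)"
proof -
  have nz: "0 \<notin> set rs" using assms(4) by (metis less_irrefl prod_list_zero_iff)
  have "filter (\<lambda>r. \<not> 0 < r) rs = filter (\<lambda>r. r < 0) rs"
    using nz by (intro filter_cong) (auto simp: not_less le_less)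
  then have "length (filter (\<lambda>r. 0 < r) rs) + length (filter (\<lambda>r. r < 0) rs) = length rs"
    using sum_length_filter_compl[of "\<lambda>r. 0 < r" rs] by simp
  then have even: "even (length (filter (\<lambda>r. 0 < r) rs))"
    using assms(2,4) prod_list_pos_iff_even_negatives[OF nz] by (metis even_add)
  have "filter (\<lambda>r. 0 < r) rs \<noteq> []"
  proof
    assume "filter (\<lambda>r. 0 < r) rs = []"
    then have neg: "\<forall>r\<in>set rs. r < 0" using nz by (metis filter_empty_conv linorder_neqE)
    then obtain r rs' where "rs = r # rs'" "r < 0" using assms(1) by (cases rs) auto
    moreover have "sum_list rs' \<le> 0" using neg \<open>rs = r # rs'\<close> by (intro sum_list_nonpos) auto
    ultimately show False using assms(3) by simp
  qed
  then have "0 < length (filter (\<lambda>r. 0 < r) rs)" by simp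
  with even show ?thesis by (rule dvd_imp_le)
qed

lemma quadratic_nonneg_if_discrim_nonpos:
  fixes a b c x :: real
  assumes "0 \<le> a" "0 \<le> c" "discrim a b c \<le> 0"
  shows "0 \<le> a * x\<^sup>2 + b * x + c"
proof (cases "a = 0")
  case True
  then show ?thesis using assms by (simp add: discrim_def)
next
  case False
  have "4 * a * (a * x\<^sup>2 + b * x + c) = (2 * a * x + b)\<^sup>2 - discrim a b c"
    by (simp add: discrim_def power2_eq_square algebra_simps)
  also have "\<dots> \<ge> 0" using assms(3) zero_le_power2[of "2 * a * x + b"] by linarith
  finally show ?thesis using assms(1) False by (simp add: zero_le_mult_iff)
qed

lemma hessian_quad_carrier: "hessian_quad n p \<in> carrier_mat n n"
  by (simp add: hessian_quad_def)

lemma hessian_quad_symmetric: "transpose_mat (hessian_quad n p) = hessian_quad n p"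
  by (intro eq_matI) (auto simp: hessian_quad_def add.commute)

lemma hessian_quad_nonneg:
  assumes "\<And>\<alpha>. 0 \<le> p \<alpha>" "i < n" "j < n"
  shows "0 \<le> hessian_quad n p $$ (i, j)"
  using assms by (simp add: hessian_quad_def)

lemma hessian_quad_quad4:
  "hessian_quad 4 (quad4 c12 c13 c14 c23 c24 c34) = mat_of_rows_list 4
     [[0, c34, c24, c23], [c34, 0, c14, c13], [c24, c14, 0, c12], [c23, c13, c12, 0]]"
proof -
  have fun_neq: "f \<noteq> g" if "f k \<noteq> g k" for f g :: "nat \<Rightarrow> nat" and k
    using that by auto
  show ?thesis
    by (intro eq_matI)
      (auto simp: hessian_quad_def mat_of_rows_list_def quad4_def unit_exp_def less_Suc_eq numeral_eq_Suc
         fun_neq[where k=0] fun_neq[where k=1] fun_neq[where k=2] fun_neq[where k=3])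
qed

lemma char_poly_zero_diagonal_4:
  "char_poly (mat_of_rows_list 4
     [[0, c34, c24, c23], [c34, 0, c14, c13], [c24, c14, 0, c12], [c23, c13, c12, 0]]) =
   [:discrim (c13 * c24) (c13 * c24 + c14 * c23 - c12 * c34) (c14 * c23),
     - 2 * (c34 * c24 * c14 + c34 * c23 * c13 + c24 * c23 * c12 + c14 * c13 * c12),
     - (c12\<^sup>2 + c13\<^sup>2 + c14\<^sup>2 + c23\<^sup>2 + c24\<^sup>2 + c34\<^sup>2), 0, 1:]"
  (is "char_poly ?H = ?p")
proof -
  have "- char_matrix ?H x = mat 4 4 (\<lambda>(i, j). (if i = j then x else 0) -
      [[0, c34, c24, c23], [c34, 0, c14, c13], [c24, c14, 0, c12], [c23, c13, c12, 0]] ! i ! j)" for x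
    by (intro eq_matI) (auto simp: char_matrix_def mat_of_rows_list_def)
  then have "poly (char_poly ?H) x = poly ?p x" for x
    by (simp add: char_poly_matrix[of _ 4] mat_of_rows_list_def numeral_eq_Suc det_mat_Suc
        lessThan_Suc discrim_def)
      (simp add: algebra_simps power2_eq_square)
  then show ?thesis by (intro poly_eq_poly_eq_iff[THEN iffD1] ext)
qed

lemma coeff_linear_factors_length_4:
  fixes rs :: "'a :: comm_ring_1 list"
  assumes "length rs = 4"
  shows "coeff (\<Prod>r\<leftarrow>rs. [:-r, 1:]) 3 = - sum_list rs"
    and "coeff (\<Prod>r\<leftarrow>rs. [:-r, 1:]) 0 = prod_list rs"
proof -
  obtain r1 r2 r3 r4 where "rs = [r1, r2, r3, r4]"
    using assms by (auto simp: numeral_eq_Suc length_Suc_conv)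
  then show "coeff (\<Prod>r\<leftarrow>rs. [:-r, 1:]) 3 = - sum_list rs"
    and "coeff (\<Prod>r\<leftarrow>rs. [:-r, 1:]) 0 = prod_list rs"
    by (simp_all add: numeral_eq_Suc algebra_simps)
qed

theorem lemma5p2:
  fixes c12 c13 c14 c23 c24 c34 r :: real
  assumes "lorentzian_quadratic 4 (quad4 c12 c13 c14 c23 c24 c34)"
  shows "(r + 1) * c14 * c23 + r * (r + 1) * c13 * c24 \<ge> r * c12 * c34"
proof -
  let ?H = "hessian_quad 4 (quad4 c12 c13 c14 c23 c24 c34)"
  let ?d = "discrim (c13 * c24) (c13 * c24 + c14 * c23 - c12 * c34) (c14 * c23)"
  have coeffs_nonneg: "\<And>\<alpha>. 0 \<le> quad4 c12 c13 c14 c23 c24 c34 \<alpha>"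
    and at_most_one_pos: "num_pos_eigenvalues ?H \<le> 1"
    using assms unfolding lorentzian_quadratic_def by auto
  have "0 \<le> ?H $$ (i, j)" if "i < 4" "j < 4" for i j
    using hessian_quad_nonneg[OF coeffs_nonneg that] .
  from this[of 1 3] this[of 0 2] this[of 1 2] this[of 0 3]
  have "0 \<le> c13 * c24" "0 \<le> c14 * c23"
    by (simp_all add: hessian_quad_quad4 mat_of_rows_list_def)
  obtain rs where rs: "char_poly ?H = (\<Prod>r\<leftarrow>rs. [:-r, 1:])" "length rs = 4"
    by (rule char_poly_real_symmetric_linear_factors[OF hessian_quad_carrier hessian_quad_symmetric])
  have "sum_list rs = 0" "prod_list rs = ?d"
    using coeff_linear_factors_length_4[OF rs(2)]
    by (simp_all add: rs(1)[symmetric] hessian_quad_quad4 char_poly_zero_diagonal_4 numeral_3_eq_3)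
  have "?d \<le> 0"
  proof (rule ccontr)
    assume "\<not> ?d \<le> 0"
    with \<open>sum_list rs = 0\<close> \<open>prod_list rs = ?d\<close> rs(2)
    have "2 \<le> length (filter (\<lambda>r. 0 < r) rs)"
      by (intro two_le_positives_if_sum_zero_prod_pos) auto
    also have "\<dots> = num_pos_eigenvalues ?H"
      by (rule num_pos_eigenvalues_linear_factors[OF hessian_quad_carrier rs(1), symmetric])
    finally show False using at_most_one_pos by simp
  qed
  with \<open>0 \<le> c13 * c24\<close> \<open>0 \<le> c14 * c23\<close>
  have "0 \<le> c13 * c24 * r\<^sup>2 + (c13 * c24 + c14 * c23 - c12 * c34) * r + c14 * c23"
    by (rule quadratic_nonneg_if_discrim_nonpos)
  then show ?thesis by (simp add: power2_eq_square algebra_simps)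
qed

end
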